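(* Let $n,m,n_f,\ell\in\mathbb{N}$, let $w>1$ be a number representable with $n$ bits of which the first $m$ are its integer part, and let $f\in[0,1]$ be given with $n_f$ bits after the binary point. Then the value $\hat{z}$ returned by Algorithm FractionalPower$(w,f,n,m,n_f,\ell)$ (described in the context), which performs arithmetic with $b=\max\{n,n_f,\lceil 5(\ell+2m+\ln n_f)\rceil,40\}$ bits after the binary point, satisfies $$|\hat{z}-w^f|\leq\left(\frac12\right)^{\ell-1}.$$
   Context: Fixed precision representation: a number $w\ge 0$ "given by $n$ bits of which the first $m$ correspond to its integer part" means $w=\sum_{j=m-n}^{m-1} w^{(j)}2^j$ with $w^{(j)}\in\{0,1\}$. For $x\geq 0$, "truncating $x$ to $b$ bits after the binary point" means replacing $x$ by $\lfloor 2^b x\rfloor/2^b$. All arithmetic inside a step is performed exactly; only the stated truncations introduce error. Algorithm SQRT$(w,n,m,b)$ (input $w\geq 1$): if $w=1$, return $1$. Otherwise: let $p\in\mathbb{N}$ with $2^{p}>w\geq 2^{p-1}$ and set $\hat{x}_0=2^{-p}$; let $s=\lceil\log_2 b\rceil$; for $i=1,\dots,s$ compute exactly $x_i=-w\hat{x}_{i-1}^2+2\hat{x}_{i-1}$ and let $\hat{x}_i$ be $x_i$ truncated to $b$ bits. Then let $q\in\mathbb{N}$ with $2^{1-q}>\hat{x}_s\geq 2^{-q}$ and set $\hat{y}_0=2^{\lfloor (q-1)/2\rfloor}$; for $j=1,\dots,s$ compute exactly $y_j=\frac12(3\hat{y}_{j-1}-\hat{x}_s\hat{y}_{j-1}^3)$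 and let $\hat{y}_j$ be $y_j$ truncated to $b$ bits. Return $\hat{y}_s$. Algorithm PowerOf2Roots$(w,k,n,m,b)$: set $\hat{z}_1=$ SQRT$(w,n,m,b)$; for $i=2,\dots,k$ set $\hat{z}_i=$ SQRT$(\hat{z}_{i-1},m+b,m,b)$. Return $\hat{z}_1,\dots,\hat{z}_k$. Algorithm FractionalPower$(w,f,n,m,n_f,\ell)$ (input $w\geq1$, $f=\sum_{i=1}^{n_f}f_i2^{-i}\in[0,1]$ or $f=1$, with bits $f_i\in\{0,1\}$): set $b=\max\{n,n_f,\lceil 5(\ell+2m+\ln n_f)\rceil,40\}$. If $f=1$ return $w$; if $f=0$ return $1$. Let $\hat{w}_1,\dots,\hat{w}_{n_f}$ be the outputs of PowerOf2Roots$(w,n_f,n,m,b)$. Set $\hat{z}=1$; for $i=1,\dots,n_f$, if $f_i=1$ replace $\hat{z}$ by $\hat{z}\hat{w}_i$ truncated to $b$ bits after the binary point. Return $\hat{z}$. *)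

theory Defs
  imports Complex_Main
begin

definition trunc_bits :: "nat \<Rightarrow> real \<Rightarrow> real" where
  "trunc_bits b x = real_of_int \<lfloor>2 ^ b * x\<rfloor> / 2 ^ b"

definition fixed_repr :: "nat \<Rightarrow> nat \<Rightarrow> real \<Rightarrow> bool" where
  "fixed_repr n m w \<longleftrightarrow> (\<exists>d :: int \<Rightarrow> bool.
      w = (\<Sum>j\<in>{int m - int n .. int m - 1}. of_bool (d j) * 2 powi j))"

text \<open>Algorithm SQRT(w,n,m,b). The parameters n, m only describe the input format.\<close>
definition SQRT :: "real \<Rightarrow> nat \<Rightarrow> nat \<Rightarrow> nat \<Rightarrow> real" where
  "SQRT w n m b =
    (if w = 1 then 1 else
     (let p = (LEAST p::nat. w < 2 ^ p);
          x0 = 2 powi (- int p);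
          s = nat \<lceil>log 2 (real b)\<rceil>;
          xs = ((\<lambda>x. trunc_bits b (- w * x ^ 2 + 2 * x)) ^^ s) x0;
          q = (LEAST q::nat. xs \<ge> 2 powi (- int q));
          y0 = 2 powi ((int q - 1) div 2)
      in ((\<lambda>y. trunc_bits b ((3 * y - xs * y ^ 3) / 2)) ^^ s) y0))"

text \<open>Algorithm PowerOf2Roots(w,k,n,m,b): the i-th output, for 1 \<le> i.\<close>
fun pow2roots :: "real \<Rightarrow> nat \<Rightarrow> nat \<Rightarrow> nat \<Rightarrow> nat \<Rightarrow> real" where
  "pow2roots w n m b 0 = w"
| "pow2roots w n m b (Suc 0) = SQRT w n m b"
| "pow2roots w n m b (Suc (Suc i)) = SQRT (pow2roots w n m b (Suc i)) (m + b) m b"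

text \<open>Algorithm FractionalPower(w,f,n,m,n_f,l); fb i is the bit f_i of f.\<close>
definition FractionalPower ::
  "real \<Rightarrow> real \<Rightarrow> (nat \<Rightarrow> bool) \<Rightarrow> nat \<Rightarrow> nat \<Rightarrow> nat \<Rightarrow> nat \<Rightarrow> real" where
  "FractionalPower w f fb n m nf l =
    (let b = max n (max nf (max (nat \<lceil>5 * (real l + 2 * real m + ln (real nf))\<rceil>) 40))
     in if f = 1 then w else if f = 0 then 1 else
        foldl (\<lambda>z i. if fb i then trunc_bits b (z * pow2roots w n m b i) else z) 1 [1..<nf+1])"

end

theory Submission
  imports Defs
begin

text \<open>Both Newton iterations inside SQRT (for \<open>1/v\<close>, then for \<open>1/\<surd>x\<close>) square their
  relative error in each step, up to an additive truncation error \<open>O(2\<^bsup>-b\<^esup>)\<close>, so after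
  \<open>\<lceil>log\<^sub>2 b\<rceil>\<close> steps the error is \<open>O(2\<^bsup>m-b/2\<^esup>)\<close>. Measured logarithmically, these errors
  do not accumulate along the chain of square roots, since each root halves the error it
  inherits; so every computed root \<open>w\<^sub>i \<approx> w\<^bsup>2\<^sup>-\<^sup>i\<^esup>\<close> has relative error \<open>O(2\<^bsup>m-b/2\<^esup>)\<close>.
  The truncated product of at most \<open>n\<^sub>f\<close> of them, whose exact partial products are all
  \<open>\<ge> 1\<close> and \<open>\<le> 2\<^sup>m\<close>, then has absolute error \<open>O(n\<^sub>f 4\<^sup>m 2\<^bsup>-b/2\<^esup>)\<close>, and the choice
  \<open>b \<ge> 5 (l + 2m + ln n\<^sub>f)\<close> makes this at most \<open>2\<^bsup>1-l\<^esup>\<close>.\<close>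

lemma trunc_bits_le: "trunc_bits b x \<le> x"
proof -
  have "real_of_int \<lfloor>2 ^ b * x\<rfloor> \<le> 2 ^ b * x" by simp
  then show ?thesis unfolding trunc_bits_def by (simp add: divide_le_eq mult.commute)
qed

lemma trunc_bits_gt: "x - 1 / 2 ^ b < trunc_bits b x"
proof -
  have "2 ^ b * x < real_of_int \<lfloor>2 ^ b * x\<rfloor> + 1" by linarith
  then have "(2 ^ b * x - 1) / 2 ^ b < real_of_int \<lfloor>2 ^ b * x\<rfloor> / 2 ^ b"
    by (simp add: divide_strict_right_mono)
  then show ?thesis unfolding trunc_bits_def by (simp add: diff_divide_distrib)
qed

lemma abs_trunc_bits_diff_le: "\<bar>trunc_bits b x - x\<bar> \<le> 1 / 2 ^ b"
  using trunc_bits_le[of b x] trunc_bits_gt[of x b] by simp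

lemma scaled_trunc_bits_bounds:
  assumes "0 < c"
  shows "c * trunc_bits b x \<le> c * x" "c * x - c / 2 ^ b \<le> c * trunc_bits b x"
proof -
  show "c * trunc_bits b x \<le> c * x"
    using trunc_bits_le assms by (simp add: mult_left_mono)
  have "c * (x - 1 / 2 ^ b) \<le> c * trunc_bits b x"
    using trunc_bits_gt[of x b] assms by (simp add: mult_left_mono less_imp_le)
  then show "c * x - c / 2 ^ b \<le> c * trunc_bits b x" by (simp add: algebra_simps)
qed

lemma sqrt_le_half:
  assumes "x \<le> 1 / 4" shows "sqrt x \<le> 1 / 2"
proof -
  have "sqrt x \<le> sqrt ((1 / 2)\<^sup>2)"
    using assms by (intro real_sqrt_le_mono) (simp add: power2_eq_square)
  then show ?thesis by simp
qed

section \<open>Quadratic convergence with truncation errors\<close>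

text \<open>The error decays doubly exponentially until it reaches the level \<open>t\<close> at which
  \<open>c t\<^sup>2 + \<epsilon> = L t\<^sup>2\<close>, and then stays below it.\<close>

lemma noisy_quadratic_convergence:
  fixes G E :: "real \<Rightarrow> real" and c L \<epsilon> :: real
  defines "t \<equiv> sqrt (\<epsilon> / (L - c))"
  assumes step: "\<And>x. 0 \<le> E x \<Longrightarrow> E x \<le> 1 / 2 \<Longrightarrow> 0 \<le> E (G x) \<and> E (G x) \<le> c * (E x)\<^sup>2 + \<epsilon>"
    and start: "0 \<le> E x" "L * E x \<le> 1 / 2"
    and coeffs: "0 \<le> c" "c < L" "1 \<le> L" "0 \<le> \<epsilon>" "L * t \<le> 1" "t \<le> 1 / 2"
  shows "0 \<le> E ((G ^^ j) x) \<and> E ((G ^^ j) x) \<le> max ((1 / 2) ^ (2 ^ j) / L) t"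
proof (induction j)
  case 0
  have "E x \<le> (1 / 2) / L" using start coeffs by (simp add: field_simps)
  then show ?case using start by simp
next
  case (Suc j)
  define u where "u = E ((G ^^ j) x)"
  define A where "A = (1 / 2 :: real) ^ (2 ^ j) / L"
  have t0: "0 \<le> t" and t2: "t\<^sup>2 = \<epsilon> / (L - c)" unfolding t_def using coeffs by simp_all
  have Lt: "L * t\<^sup>2 \<le> t"
    using mult_right_mono[OF \<open>L * t \<le> 1\<close> t0] by (simp add: power2_eq_square mult.assoc)
  have A0: "0 \<le> A" unfolding A_def using coeffs by simp
  have "(1 / 2 :: real) ^ (2 ^ j) \<le> (1 / 2) ^ 1" by (rule power_decreasing) auto
  then have A1: "A \<le> 1 / 2" unfolding A_def using coeffs by (simp add: divide_le_eq)
  have LA: "L * A\<^sup>2 = (1 / 2) ^ (2 ^ Suc j) / L"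
    unfolding A_def using coeffs by (simp add: power2_eq_square power_add[symmetric] field_simps)
  have u: "0 \<le> u" "u \<le> max A t" using Suc unfolding u_def A_def by auto
  then have "0 \<le> E (G ((G ^^ j) x))" "E (G ((G ^^ j) x)) \<le> c * u\<^sup>2 + \<epsilon>"
    using step[of "(G ^^ j) x"] A1 coeffs unfolding u_def by auto
  moreover have "c * u\<^sup>2 + \<epsilon> \<le> max (L * A\<^sup>2) t"
  proof (cases "t \<le> u")
    case True
    have "\<epsilon> / (L - c) \<le> u\<^sup>2" using power_mono[OF True t0, of 2] t2 by simp
    then have "\<epsilon> \<le> (L - c) * u\<^sup>2" using coeffs by (simp add: field_simps)
    then have "c * u\<^sup>2 + \<epsilon> \<le> L * u\<^sup>2" by (simp add: algebra_simps)
    also have "\<dots> \<le> L * (max A t)\<^sup>2"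
      using u coeffs by (intro mult_left_mono power_mono) auto
    also have "\<dots> \<le> max (L * A\<^sup>2) t"
      using A0 t0 Lt by (cases "A \<le> t") (auto simp: max_def)
    finally show ?thesis .
  next
    case False
    then have "c * u\<^sup>2 \<le> c * t\<^sup>2"
      using u coeffs by (intro mult_left_mono power_mono) auto
    also have "c * t\<^sup>2 + \<epsilon> = L * t\<^sup>2" using t2 coeffs by (simp add: field_simps)
    ultimately show ?thesis using Lt by linarith
  qed
  ultimately show ?case unfolding LA by simp
qed

text \<open>The first step is treated separately: from a starting error of at most \<open>1/2\<close> it only
  satisfies the cruder bound \<open>5/16 + \<epsilon>\<close>, and \<open>L = 31/20\<close> is chosen with
  \<open>L (5/16 + \<epsilon>) \<le> 1/2\<close>.\<close>

lemma newton_iteration_error: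
  fixes G E :: "real \<Rightarrow> real" and \<epsilon> :: real
  assumes step: "\<And>x. 0 \<le> E x \<Longrightarrow> E x \<le> 1 / 2 \<Longrightarrow> 0 \<le> E (G x) \<and> E (G x) \<le> 3 / 2 * (E x)\<^sup>2 + \<epsilon>"
    and first: "0 \<le> E (G x)" "E (G x) \<le> 5 / 16 + \<epsilon>"
    and eps: "0 \<le> \<epsilon>" "\<epsilon> \<le> 1 / 1000"
  shows "0 \<le> E ((G ^^ Suc j) x)" "E ((G ^^ Suc j) x) \<le> 1 / 2"
    and "E ((G ^^ Suc j) x) \<le> max ((1 / 2) ^ (2 ^ j)) (sqrt (20 * \<epsilon>))"
proof -
  have t: "sqrt (\<epsilon> / (31 / 20 - 3 / 2)) = sqrt (20 * \<epsilon>)" by simp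
  have t_half: "sqrt (20 * \<epsilon>) \<le> 1 / 2" using eps by (intro sqrt_le_half) linarith
  have iter: "(G ^^ Suc j) x = (G ^^ j) (G x)" by (simp del: funpow.simps add: funpow_Suc_right)
  have "0 \<le> E ((G ^^ j) (G x)) \<and>
      E ((G ^^ j) (G x)) \<le> max ((1 / 2) ^ (2 ^ j) / (31 / 20)) (sqrt (20 * \<epsilon>))"
    using noisy_quadratic_convergence[of E G "3 / 2" \<epsilon> "G x" "31 / 20" j] step first eps t_half
    unfolding t by fastforce
  moreover have "(1 / 2 :: real) ^ (2 ^ j) / (31 / 20) \<le> (1 / 2) ^ (2 ^ j)" by simp
  moreover have "(1 / 2 :: real) ^ (2 ^ j) \<le> 1 / 2"
    using power_decreasing[of 1 "2 ^ j" "1 / 2 :: real"] by simp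
  ultimately show "0 \<le> E ((G ^^ Suc j) x)" "E ((G ^^ Suc j) x) \<le> 1 / 2"
    and "E ((G ^^ Suc j) x) \<le> max ((1 / 2) ^ (2 ^ j)) (sqrt (20 * \<epsilon>))"
    unfolding iter using t_half by auto
qed

section \<open>The two Newton iterations of SQRT\<close>

definition recip_step :: "nat \<Rightarrow> real \<Rightarrow> real \<Rightarrow> real" where
  "recip_step b v x = trunc_bits b (- v * x\<^sup>2 + 2 * x)"

definition rsqrt_step :: "nat \<Rightarrow> real \<Rightarrow> real \<Rightarrow> real" where
  "rsqrt_step b a y = trunc_bits b ((3 * y - a * y ^ 3) / 2)"

definition recip_guess :: "real \<Rightarrow> real" where
  "recip_guess v = 2 powi (- int (LEAST p::nat. v < 2 ^ p))"

definition rsqrt_guess :: "real \<Rightarrow> real" where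
  "rsqrt_guess a = 2 powi ((int (LEAST q::nat. 2 powi (- int q) \<le> a) - 1) div 2)"

definition newton_steps :: "nat \<Rightarrow> nat" where
  "newton_steps b = nat \<lceil>log 2 (real b)\<rceil>"

lemma SQRT_eq_newton_iterates:
  assumes "v \<noteq> 1"
  shows "SQRT v n m b =
    (let x = (recip_step b v ^^ newton_steps b) (recip_guess v)
     in (rsqrt_step b x ^^ newton_steps b) (rsqrt_guess x))"
  using assms unfolding SQRT_def recip_step_def[abs_def] rsqrt_step_def[abs_def]
    recip_guess_def rsqrt_guess_def newton_steps_def Let_def
  by simp

lemma recip_step_error:
  assumes "0 < v"
  shows "(1 - v * x)\<^sup>2 \<le> 1 - v * recip_step b v x"
    and "1 - v * recip_step b v x \<le> (1 - v * x)\<^sup>2 + v / 2 ^ b"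
proof -
  have "1 - v * (- v * x\<^sup>2 + 2 * x) = (1 - v * x)\<^sup>2"
    by (simp add: power2_eq_square algebra_simps)
  then show "(1 - v * x)\<^sup>2 \<le> 1 - v * recip_step b v x"
    and "1 - v * recip_step b v x \<le> (1 - v * x)\<^sup>2 + v / 2 ^ b"
    using scaled_trunc_bits_bounds[OF assms, where b = b and x = "- v * x\<^sup>2 + 2 * x"]
    unfolding recip_step_def by linarith+
qed

lemma rsqrt_step_error:
  fixes a y :: real
  assumes "0 < a"
  defines "d \<equiv> 1 - sqrt a * y"
  shows "d\<^sup>2 * (3 - d) / 2 \<le> 1 - sqrt a * rsqrt_step b a y"
    and "1 - sqrt a * rsqrt_step b a y \<le> d\<^sup>2 * (3 - d) / 2 + sqrt a / 2 ^ b"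
proof -
  define Y where "Y = (3 * y - a * y ^ 3) / 2"
  have sqrt_sq: "sqrt a * sqrt a = a" using assms by simp
  have cube: "(sqrt a * y) ^ 3 = (sqrt a * sqrt a) * sqrt a * y ^ 3"
    by (simp add: power3_eq_cube algebra_simps)
  have "sqrt a * Y = (3 * (sqrt a * y) - (sqrt a * y) ^ 3) / 2"
    unfolding Y_def cube sqrt_sq by (simp add: algebra_simps)
  moreover have "1 - (3 * r - r ^ 3) / 2 = (1 - r)\<^sup>2 * (3 - (1 - r)) / 2" for r :: real
    by (simp add: power2_eq_square power3_eq_cube field_simps)
  ultimately have "1 - sqrt a * Y = d\<^sup>2 * (3 - d) / 2"
    unfolding d_def by metis
  moreover have "0 < sqrt a" using assms by simp
  ultimately show "d\<^sup>2 * (3 - d) / 2 \<le> 1 - sqrt a * rsqrt_step b a y"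
    and "1 - sqrt a * rsqrt_step b a y \<le> d\<^sup>2 * (3 - d) / 2 + sqrt a / 2 ^ b"
    using scaled_trunc_bits_bounds[where c = "sqrt a" and b = b and x = Y]
    unfolding rsqrt_step_def Y_def[symmetric] by linarith+
qed

lemma rsqrt_error_map_bounds:
  fixes d :: real
  assumes "0 \<le> d" "d \<le> 1 / 2"
  shows "0 \<le> d\<^sup>2 * (3 - d) / 2" "d\<^sup>2 * (3 - d) / 2 \<le> 3 / 2 * d\<^sup>2" "d\<^sup>2 * (3 - d) / 2 \<le> 5 / 16"
proof -
  show "0 \<le> d\<^sup>2 * (3 - d) / 2" using assms by simp
  show "d\<^sup>2 * (3 - d) / 2 \<le> 3 / 2 * d\<^sup>2" using assms by (simp add: algebra_simps)
  have "d\<^sup>2 \<le> (1 / 2)\<^sup>2" using assms by (intro power_mono) auto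
  then have "0 \<le> (1 / 2 - d) * (5 / 4 + 5 * d / 2 - d\<^sup>2)"
    using assms by (intro mult_nonneg_nonneg) (auto simp: power2_eq_square)
  then show "d\<^sup>2 * (3 - d) / 2 \<le> 5 / 16"
    by (simp add: power2_eq_square field_simps)
qed

lemma recip_guess_error:
  assumes "1 / 2 \<le> v"
  shows "0 \<le> 1 - v * recip_guess v" "1 - v * recip_guess v \<le> 1 / 2"
proof -
  define p where "p = (LEAST p::nat. v < 2 ^ p)"
  have "\<exists>p::nat. v < 2 ^ p" using real_arch_pow[of 2 v] by auto
  then have upper: "v < 2 ^ p" unfolding p_def by (rule LeastI_ex)
  have lower: "2 ^ p \<le> 2 * v"
  proof (cases p)
    case 0
    then show ?thesis using assms by simp
  next
    case (Suc k)
    then have "\<not> v < 2 ^ k" unfolding p_def by (metis lessI not_less_Least)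
    then show ?thesis using Suc by simp
  qed
  have guess: "v * recip_guess v = v / 2 ^ p"
    unfolding recip_guess_def p_def[symmetric] by (simp add: power_int_minus_divide)
  show "0 \<le> 1 - v * recip_guess v" "1 - v * recip_guess v \<le> 1 / 2"
    unfolding guess using upper lower by (simp_all add: field_simps)
qed

text \<open>With \<open>2\<^sup>-\<^sup>q \<le> a \<le> 2\<^sup>1\<^sup>-\<^sup>q\<close> and \<open>k = \<lfloor>(q - 1) / 2\<rfloor>\<close>, the guess \<open>2\<^sup>k\<close> puts
  \<open>a 4\<^sup>k\<close> into \<open>[1/4, 1]\<close>.\<close>

lemma rsqrt_guess_error:
  assumes "0 < a" "a \<le> 2"
  shows "0 \<le> 1 - sqrt a * rsqrt_guess a" "1 - sqrt a * rsqrt_guess a \<le> 1 / 2"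
proof -
  define q where "q = (LEAST q::nat. 2 powi (- int q) \<le> a)"
  define k where "k = (int q - 1) div 2"
  have "\<exists>q::nat. (1 / 2) ^ q < a" using real_arch_pow_inv[OF assms(1), of "1 / 2"] by auto
  then have "\<exists>q::nat. 2 powi (- int q) \<le> (a::real)"
    by (auto simp: power_int_minus_divide power_divide intro: less_imp_le)
  then have lower: "2 powi (- int q) \<le> a" unfolding q_def by (rule LeastI_ex)
  have upper: "a \<le> 2 powi (1 - int q)"
  proof (cases q)
    case 0
    then show ?thesis using assms by simp
  next
    case (Suc j)
    then have "\<not> 2 powi (- int j) \<le> a" unfolding q_def by (metis lessI not_less_Least)
    then show ?thesis using Suc by simp
  qed
  have guess: "a * (rsqrt_guess a)\<^sup>2 = a * 2 powi (2 * k)"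
    unfolding rsqrt_guess_def q_def[symmetric] k_def[symmetric]
    by (simp add: power_int_power' mult.commute)
  have "(1 / 4 :: real) = 2 powi (- int q + (int q - 2))" by (simp add: power_int_minus_divide)
  also have "\<dots> = 2 powi (- int q) * 2 powi (int q - 2)" by (rule power_int_add) simp
  also have "\<dots> \<le> a * 2 powi (2 * k)"
    using lower assms by (intro mult_mono power_int_increasing) (auto simp: k_def)
  finally have quarter: "1 / 4 \<le> a * (rsqrt_guess a)\<^sup>2" unfolding guess .
  have "a * 2 powi (2 * k) \<le> 2 powi (1 - int q) * 2 powi (int q - 1)"
    using upper by (intro mult_mono power_int_increasing) (auto simp: k_def)
  also have "\<dots> = 2 powi (1 - int q + (int q - 1))" by (rule power_int_add[symmetric]) simp
  also have "\<dots> = 1" by simp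
  finally have one: "a * (rsqrt_guess a)\<^sup>2 \<le> 1" unfolding guess .
  have "sqrt a * rsqrt_guess a = sqrt (a * (rsqrt_guess a)\<^sup>2)"
    unfolding rsqrt_guess_def by (simp add: real_sqrt_mult)
  moreover have "sqrt (1 / 4) \<le> sqrt (a * (rsqrt_guess a)\<^sup>2)" "sqrt (a * (rsqrt_guess a)\<^sup>2) \<le> 1"
    using quarter one by simp_all
  moreover have "sqrt (1 / 4 :: real) = 1 / 2" by (simp add: real_sqrt_divide)
  ultimately show "0 \<le> 1 - sqrt a * rsqrt_guess a" "1 - sqrt a * rsqrt_guess a \<le> 1 / 2"
    by simp_all
qed

lemma newton_steps_pos: "2 \<le> b \<Longrightarrow> 0 < newton_steps b"
  unfolding newton_steps_def by (simp add: le_log_iff)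

lemma half_pow_newton_steps_le:
  assumes "2 \<le> b"
  shows "(1 / 2) ^ (2 ^ (newton_steps b - 1)) \<le> sqrt (1 / 2 ^ b)"
proof (rule real_le_rsqrt)
  define s where "s = newton_steps b"
  have "log 2 (real b) \<le> real s"
    unfolding s_def newton_steps_def by linarith
  then have "real b \<le> 2 ^ s"
    using assms by (simp add: log_le_iff powr_realpow)
  then have b: "b \<le> 2 ^ s" by (metis of_nat_le_iff of_nat_numeral of_nat_power)
  have "((1 / 2 :: real) ^ (2 ^ (s - 1)))\<^sup>2 = (1 / 2) ^ (2 ^ s)"
    using newton_steps_pos[OF assms] unfolding s_def
    by (simp add: power_mult[symmetric] power_Suc[symmetric] mult.commute)
  also have "\<dots> \<le> (1 / 2) ^ b" by (rule power_decreasing) (use b in auto)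
  finally show "((1 / 2 :: real) ^ (2 ^ (newton_steps b - 1)))\<^sup>2 \<le> 1 / 2 ^ b"
    unfolding s_def by (simp add: power_divide)
qed

lemma newton_final_error_le:
  assumes "2 \<le> b" "0 \<le> c"
  shows "max ((1 / 2) ^ (2 ^ (newton_steps b - 1))) (sqrt (20 * (c / 2 ^ b)))
    \<le> (1 + sqrt (20 * c)) * sqrt (1 / 2 ^ b)"
proof -
  have "sqrt (20 * (c / 2 ^ b)) = sqrt (20 * c) * sqrt (1 / 2 ^ b)"
    by (simp flip: real_sqrt_mult)
  moreover have "0 \<le> sqrt (20 * c) * sqrt (1 / 2 ^ b)" using assms(2) by simp
  ultimately show ?thesis
    using half_pow_newton_steps_le[OF assms(1)] by (simp add: algebra_simps)
qed

lemma recip_iteration_error: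
  assumes v: "1 / 2 \<le> v" and b: "2 \<le> b" "v / 2 ^ b \<le> 1 / 1000"
  defines "e \<equiv> 1 - v * (recip_step b v ^^ newton_steps b) (recip_guess v)"
  shows "0 \<le> e" "e \<le> 1 / 2" "e \<le> (1 + sqrt (20 * v)) * sqrt (1 / 2 ^ b)"
proof -
  let ?E = "\<lambda>x. 1 - v * x"
  have v_pos: "0 < v" using v by simp
  have step: "0 \<le> ?E (recip_step b v x) \<and> ?E (recip_step b v x) \<le> 3 / 2 * (?E x)\<^sup>2 + v / 2 ^ b" for x
    using recip_step_error[OF v_pos, where x = x and b = b] zero_le_power2[of "?E x"] by linarith
  have "(?E (recip_guess v))\<^sup>2 \<le> (1 / 2)\<^sup>2"
    using recip_guess_error[OF v] by (intro power_mono) auto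
  then have "0 \<le> (?E (recip_guess v))\<^sup>2" "(?E (recip_guess v))\<^sup>2 \<le> 1 / 4"
    by (simp_all add: power_divide)
  then have first: "0 \<le> ?E (recip_step b v (recip_guess v))" "?E (recip_step b v (recip_guess v)) \<le> 5 / 16 + v / 2 ^ b"
    using recip_step_error[OF v_pos, where x = "recip_guess v" and b = b] by linarith+
  have s: "newton_steps b = Suc (newton_steps b - 1)" using newton_steps_pos[OF b(1)] by simp
  show "0 \<le> e" "e \<le> 1 / 2" "e \<le> (1 + sqrt (20 * v)) * sqrt (1 / 2 ^ b)"
    using newton_iteration_error[of ?E "recip_step b v", OF step first _ b(2), of "newton_steps b - 1"]
      newton_final_error_le[OF b(1), of v] v_pos
    unfolding e_def s[symmetric] by auto
qed

lemma rsqrt_iteration_error: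
  assumes a: "0 < a" "a \<le> 2" and b: "40 \<le> b"
  defines "d \<equiv> 1 - sqrt a * (rsqrt_step b a ^^ newton_steps b) (rsqrt_guess a)"
  shows "0 \<le> d" "d \<le> 1 / 2" "d \<le> 8 * sqrt (1 / 2 ^ b)"
proof -
  let ?E = "\<lambda>y. 1 - sqrt a * y"
  have sqrt_a: "sqrt a \<le> 2"
    using a real_sqrt_le_mono[of a 4] by simp
  have "(2::real) ^ 11 \<le> 2 ^ b" using b by (intro power_increasing) auto
  then have eps: "sqrt a / 2 ^ b \<le> 1 / 1000"
    using sqrt_a by (simp add: field_simps)
  have step: "0 \<le> ?E (rsqrt_step b a y) \<and> ?E (rsqrt_step b a y) \<le> 3 / 2 * (?E y)\<^sup>2 + sqrt a / 2 ^ b"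
    if "0 \<le> ?E y" "?E y \<le> 1 / 2" for y
    using rsqrt_step_error[OF a(1), where y = y and b = b] rsqrt_error_map_bounds[OF that] by linarith
  have first: "0 \<le> ?E (rsqrt_step b a (rsqrt_guess a))" "?E (rsqrt_step b a (rsqrt_guess a)) \<le> 5 / 16 + sqrt a / 2 ^ b"
    using rsqrt_step_error[OF a(1), where y = "rsqrt_guess a" and b = b]
      rsqrt_error_map_bounds[OF rsqrt_guess_error[OF a]] by linarith+
  have s: "newton_steps b = Suc (newton_steps b - 1)" using newton_steps_pos b by simp
  have "max ((1 / 2) ^ (2 ^ (newton_steps b - 1))) (sqrt (20 * (sqrt a / 2 ^ b)))
      \<le> (1 + sqrt (20 * sqrt a)) * sqrt (1 / 2 ^ b)"
    using newton_final_error_le[of b "sqrt a"] b less_imp_le[OF a(1)] by simp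
  also have "\<dots> \<le> 8 * sqrt (1 / 2 ^ b)"
    using sqrt_a by (intro mult_right_mono) (auto intro: real_le_lsqrt)
  finally have "max ((1 / 2) ^ (2 ^ (newton_steps b - 1))) (sqrt (20 * (sqrt a / 2 ^ b)))
      \<le> 8 * sqrt (1 / 2 ^ b)" .
  then show "0 \<le> d" "d \<le> 1 / 2" "d \<le> 8 * sqrt (1 / 2 ^ b)"
    using newton_iteration_error[of ?E "rsqrt_step b a", OF step first _ eps, of "newton_steps b - 1"] a
    unfolding d_def s[symmetric] by auto
qed

section \<open>Logarithmic error of SQRT and PowerOf2Roots\<close>

lemma abs_ln_one_minus_le:
  fixes x :: real
  assumes "0 \<le> x" "x \<le> 1 / 2"
  shows "\<bar>ln (1 - x)\<bar> \<le> 2 * x"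
proof -
  have "- x - 2 * x\<^sup>2 \<le> ln (1 - x)" by (rule ln_one_minus_pos_lower_bound[OF assms])
  moreover have "x\<^sup>2 \<le> x * (1 / 2)"
    using mult_left_mono[OF assms(2) assms(1)] by (simp add: power2_eq_square)
  moreover have "ln (1 - x) \<le> 0" using assms by simp
  ultimately show ?thesis by linarith
qed

text \<open>With \<open>e\<close> and \<open>d\<close> the relative errors of the two Newton iterations, the result is
  \<open>(1 - d) / sqrt ((1 - e) / v)\<close>, so its logarithm is off by \<open>ln (1 - d) - ln (1 - e) / 2\<close>.\<close>

lemma SQRT_log_error:
  assumes v: "1 / 2 \<le> v" and b: "40 \<le> b" "v / 2 ^ b \<le> 1 / 1000"
  shows "0 < SQRT v n m b \<and> \<bar>ln (SQRT v n m b) - ln v / 2\<bar> \<le> (17 + sqrt (20 * v)) * sqrt (1 / 2 ^ b)"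
proof (cases "v = 1")
  case True
  then show ?thesis unfolding SQRT_def by simp
next
  case False
  define x where "x = (recip_step b v ^^ newton_steps b) (recip_guess v)"
  define y where "y = (rsqrt_step b x ^^ newton_steps b) (rsqrt_guess x)"
  define e where "e = 1 - v * x"
  define d where "d = 1 - sqrt x * y"
  have SQRT: "SQRT v n m b = y"
    using SQRT_eq_newton_iterates[OF False] unfolding x_def y_def Let_def by simp
  have e: "0 \<le> e" "e \<le> 1 / 2" "e \<le> (1 + sqrt (20 * v)) * sqrt (1 / 2 ^ b)"
    using recip_iteration_error[OF v _ b(2)] b unfolding e_def x_def by auto
  have v_pos: "0 < v" using v by simp
  have x_eq: "x = (1 - e) / v" unfolding e_def using v_pos by simp
  have x: "0 < x" "x \<le> 2"
  proof -
    show "0 < x" unfolding x_eq using e v_pos by simp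
    have "(1 - e) / v \<le> 1 / v" using e v_pos by (simp add: divide_right_mono)
    also have "\<dots> \<le> 2" using v by (simp add: divide_le_eq)
    finally show "x \<le> 2" unfolding x_eq .
  qed
  have d: "0 \<le> d" "d \<le> 1 / 2" "d \<le> 8 * sqrt (1 / 2 ^ b)"
    using rsqrt_iteration_error[OF x b(1)] unfolding d_def y_def by auto
  have y_eq: "y = (1 - d) / sqrt x" unfolding d_def using x by simp
  have y_pos: "0 < y" unfolding y_eq using d x by simp
  have "ln y = ln (1 - d) - ln x / 2" unfolding y_eq using d x by (simp add: ln_div ln_sqrt)
  moreover have "ln x = ln (1 - e) - ln v" unfolding x_eq using e v_pos by (simp add: ln_div)
  ultimately have "ln y - ln v / 2 = ln (1 - d) - ln (1 - e) / 2" by (simp add: field_simps)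
  then have "\<bar>ln y - ln v / 2\<bar> \<le> 2 * d + e"
    using abs_ln_one_minus_le[of d] abs_ln_one_minus_le[of e] d e by linarith
  with d e y_pos show ?thesis unfolding SQRT by (simp add: algebra_simps)
qed

lemma SQRT_format_irrelevant: "SQRT x n m b = SQRT x n' m' b"
  unfolding SQRT_def by simp

lemma pow2roots_Suc: "pow2roots w n m b (Suc i) = SQRT (pow2roots w n m b i) n m b"
  by (cases i) (simp_all add: SQRT_format_irrelevant[of _ "m + b" m b n m])

lemma ln_2_ge_two_thirds: "2 / 3 \<le> ln (2::real)"
proof -
  have "ln ((24 / 23 :: real) ^ 16) \<le> ln 2"
    by (subst ln_le_cancel_iff) (simp_all add: power_divide)
  then have "16 * ln (24 / 23 :: real) \<le> ln 2" by (simp add: ln_realpow)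
  moreover have "ln (1 / (24 / 23 :: real)) \<le> 1 / (24 / 23) - 1" by (rule ln_le_minus_one) simp
  then have "1 / 24 \<le> ln (24 / 23 :: real)" by (simp add: ln_div)
  ultimately show ?thesis by linarith
qed

lemma SQRT_log_error_scaled:
  assumes x: "1 / 2 \<le> x" "x \<le> 2 * 2 ^ m" and b: "40 \<le> b" "96 * 2 ^ m * sqrt (1 / 2 ^ b) \<le> 1"
  shows "0 < SQRT x n m b \<and> \<bar>ln (SQRT x n m b) - ln x / 2\<bar> \<le> 24 * 2 ^ m * sqrt (1 / 2 ^ b)"
proof -
  define \<beta> where "\<beta> = sqrt (1 / 2 ^ b :: real)"
  have \<beta>: "0 \<le> \<beta>" "96 * 2 ^ m * \<beta> \<le> 1" "\<beta> \<le> 2 ^ m * \<beta>"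
    using b unfolding \<beta>_def by simp_all
  have "x / 2 ^ b = x * \<beta>\<^sup>2" unfolding \<beta>_def by simp
  also have "\<dots> \<le> 2 * 2 ^ m * \<beta>\<^sup>2"
    using x by (intro mult_right_mono) auto
  also have "\<dots> = 2 * (2 ^ m * \<beta>) * \<beta>" by (simp add: power2_eq_square)
  also have "\<dots> \<le> 2 * (1 / 96) * (1 / 96)" using \<beta> by (intro mult_mono) auto
  finally have eps: "x / 2 ^ b \<le> 1 / 1000" by linarith
  have "(2::real) ^ m * 1 \<le> 2 ^ m * 2 ^ m" by (intro mult_left_mono) simp_all
  then have "20 * x \<le> 49 * (2 ^ m * 2 ^ m)" using x by linarith
  then have "20 * x \<le> (7 * 2 ^ m)\<^sup>2" by (simp add: power2_eq_square)
  then have "(17 + sqrt (20 * x)) * \<beta> \<le> (17 + 7 * 2 ^ m) * \<beta>"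
    using \<beta> by (intro mult_right_mono) (auto intro: real_le_lsqrt)
  also have "\<dots> \<le> 24 * 2 ^ m * \<beta>" using \<beta> by (simp add: algebra_simps)
  finally have "(17 + sqrt (20 * x)) * \<beta> \<le> 24 * 2 ^ m * \<beta>" .
  with SQRT_log_error[OF x(1) b(1) eps, of n m] show ?thesis
    unfolding \<beta>_def by linarith
qed

lemma bounds_of_abs_ln_root_diff_le:
  fixes w x :: real
  assumes w: "1 < w" "w < 2 ^ m" and x: "0 < x" "\<bar>ln x - ln w / 2 ^ i\<bar> \<le> 1 / 2"
  shows "1 / 2 \<le> x" "x \<le> 2 * 2 ^ m"
proof -
  have "0 \<le> ln w / 2 ^ i" "ln w / 2 ^ i \<le> ln w" using w by (simp_all add: divide_le_eq)
  moreover have "ln w \<le> m * ln 2" using w ln_less_cancel_iff[of w "2 ^ m"] by (simp add: ln_realpow)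
  ultimately have "- ln 2 \<le> ln x" "ln x \<le> m * ln 2 + ln 2"
    using x(2) ln_2_ge_two_thirds unfolding abs_le_iff by linarith+
  moreover have "ln ((2::real) ^ (m + 1)) = m * ln 2 + ln 2" by (subst ln_realpow) (auto simp: algebra_simps)
  ultimately have "ln (1 / 2) \<le> ln x" "ln x \<le> ln (2 ^ (m + 1))"
    by (simp_all add: ln_div)
  then show "1 / 2 \<le> x" "x \<le> 2 * 2 ^ m"
    using x by (subst (asm) ln_le_cancel_iff; simp)+
qed

text \<open>Each square root halves the error inherited from the previous root and adds its own,
  so the logarithmic error stays below twice the error of a single call.\<close>

lemma pow2roots_log_error:
  assumes w: "1 < w" "w < 2 ^ m" and b: "40 \<le> b" "96 * 2 ^ m * sqrt (1 / 2 ^ b) \<le> 1"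
  shows "0 < pow2roots w n m b i \<and> \<bar>ln (pow2roots w n m b i) - ln w / 2 ^ i\<bar> \<le> 48 * 2 ^ m * sqrt (1 / 2 ^ b)"
proof (induction i)
  case 0
  then show ?case using w by simp
next
  case (Suc i)
  define \<eta> where "\<eta> = 24 * 2 ^ m * sqrt (1 / 2 ^ b :: real)"
  define x where "x = pow2roots w n m b i"
  have x: "0 < x" "\<bar>ln x - ln w / 2 ^ i\<bar> \<le> 2 * \<eta>"
    using Suc unfolding x_def \<eta>_def by auto
  moreover have "2 * \<eta> \<le> 1 / 2" using b unfolding \<eta>_def by simp
  ultimately have "1 / 2 \<le> x" "x \<le> 2 * 2 ^ m"
    using bounds_of_abs_ln_root_diff_le[OF w] by (meson order_trans)+
  then have root: "0 < SQRT x n m b" "\<bar>ln (SQRT x n m b) - ln x / 2\<bar> \<le> \<eta>"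
    using SQRT_log_error_scaled[OF _ _ b] unfolding \<eta>_def by auto
  have "ln (SQRT x n m b) - ln w / 2 ^ Suc i = (ln (SQRT x n m b) - ln x / 2) + (ln x - ln w / 2 ^ i) / 2"
    by (simp add: field_simps)
  then have "\<bar>ln (SQRT x n m b) - ln w / 2 ^ Suc i\<bar> \<le> 2 * \<eta>"
    using root x by (simp add: abs_le_iff)
  with root show ?case unfolding pow2roots_Suc x_def[symmetric] \<eta>_def by simp
qed

lemma abs_exp_minus_one_le:
  fixes x :: real
  assumes "\<bar>x\<bar> \<le> 1 / 2"
  shows "\<bar>exp x - 1\<bar> \<le> 2 * \<bar>x\<bar>"
proof (cases "0 \<le> x")
  case True
  then have "exp x \<le> 1 + 2 * x" using assms by (intro real_exp_bound_lemma) auto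
  then show ?thesis using True by simp
next
  case False
  then have "\<bar>exp x - 1\<bar> = 1 - exp x" by simp
  then show ?thesis using exp_ge_add_one_self[of x] False by linarith
qed

lemma abs_diff_le_of_abs_ln_diff_le:
  fixes x y t :: real
  assumes "0 < x" "0 < y" "\<bar>ln x - ln y\<bar> \<le> t" "t \<le> 1 / 2"
  shows "\<bar>x - y\<bar> \<le> y * (2 * t)"
proof -
  have "x - y = y * (exp (ln x - ln y) - 1)" using assms by (simp add: exp_diff algebra_simps)
  moreover have "\<bar>exp (ln x - ln y) - 1\<bar> \<le> 2 * t"
    using abs_exp_minus_one_le[of "ln x - ln y"] assms by simp
  ultimately show ?thesis using assms by (simp add: abs_mult mult_left_mono)
qed

lemma pow2roots_relative_error:
  assumes "1 < w" "w < 2 ^ m" "40 \<le> b" "96 * 2 ^ m * sqrt (1 / 2 ^ b) \<le> 1"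
  shows "0 < pow2roots w n m b i"
    and "\<bar>pow2roots w n m b i - w powr ((1 / 2) ^ i)\<bar> \<le> w powr ((1 / 2) ^ i) * (96 * 2 ^ m * sqrt (1 / 2 ^ b))"
proof -
  have "ln (w powr ((1 / 2) ^ i)) = ln w / 2 ^ i"
    using assms by (simp add: power_divide)
  then show "0 < pow2roots w n m b i"
    and "\<bar>pow2roots w n m b i - w powr ((1 / 2) ^ i)\<bar> \<le> w powr ((1 / 2) ^ i) * (96 * 2 ^ m * sqrt (1 / 2 ^ b))"
    using pow2roots_log_error[OF assms, of n i] assms(1, 4)
      abs_diff_le_of_abs_ln_diff_le[of "pow2roots w n m b i" "w powr ((1 / 2) ^ i)" "48 * 2 ^ m * sqrt (1 / 2 ^ b)"]
    by auto
qed

section \<open>Error of the truncated product\<close>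

lemma truncated_product_step_error:
  fixes z p w r \<theta> R :: real
  assumes z: "\<bar>z - p\<bar> \<le> p * R" and p: "1 \<le> p" and r: "1 \<le> r"
    and w: "0 \<le> w" "\<bar>w - r\<bar> \<le> r * \<theta>" and nonneg: "0 \<le> \<theta>" "0 \<le> R"
  shows "\<bar>trunc_bits b (z * w) - p * r\<bar> \<le> p * r * (R * (1 + \<theta>) + \<theta> + 1 / 2 ^ b)"
proof -
  have pr: "1 \<le> p * r" using p r by (metis mult_mono mult_1_left order_trans zero_le_one)
  have "z * w - p * r = (z - p) * w + p * (w - r)" by (simp add: algebra_simps)
  then have "\<bar>z * w - p * r\<bar> \<le> \<bar>(z - p) * w\<bar> + \<bar>p * (w - r)\<bar>"
    by (metis abs_triangle_ineq)
  also have "\<dots> = \<bar>z - p\<bar> * w + p * \<bar>w - r\<bar>"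
    using w p by (simp add: abs_mult)
  also have "\<dots> \<le> (p * R) * (r * (1 + \<theta>)) + p * (r * \<theta>)"
    using z p w nonneg by (intro add_mono mult_mono mult_left_mono) (auto simp: algebra_simps abs_le_iff)
  also have "\<dots> = p * r * (R * (1 + \<theta>) + \<theta>)" by (simp add: algebra_simps)
  finally have product: "\<bar>z * w - p * r\<bar> \<le> p * r * (R * (1 + \<theta>) + \<theta>)" .
  have "1 * (1 / 2 ^ b) \<le> p * r * (1 / 2 ^ b)" using pr by (intro mult_right_mono) auto
  then have "\<bar>trunc_bits b (z * w) - z * w\<bar> \<le> p * r * (1 / 2 ^ b)"
    using abs_trunc_bits_diff_le[of b "z * w"] by linarith
  with product show ?thesis unfolding abs_le_iff by (simp add: algebra_simps)
qed

text \<open>Relative errors of the factors and absolute truncation errors are accumulated as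
  relative errors, which is possible because all exact partial products are at least \<open>1\<close>.\<close>

lemma truncated_product_error:
  fixes W \<rho> :: "nat \<Rightarrow> real" and fb :: "nat \<Rightarrow> bool" and \<theta> :: real
  defines "P \<equiv> \<lambda>k. \<Prod>i=1..k. if fb i then \<rho> i else 1"
  assumes \<rho>: "\<And>i. 1 \<le> \<rho> i" and W: "\<And>i. 0 \<le> W i" "\<And>i. \<bar>W i - \<rho> i\<bar> \<le> \<rho> i * \<theta>"
    and \<theta>: "0 \<le> \<theta>"
  shows "\<bar>foldl (\<lambda>z i. if fb i then trunc_bits b (z * W i) else z) 1 [1..<k + 1] - P k\<bar>
    \<le> P k * (k * (\<theta> + 1 / 2 ^ b) * (1 + \<theta>) ^ k)"
proof (induction k)
  case 0
  then show ?case unfolding P_def by simp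
next
  case (Suc k)
  define \<delta> :: real where "\<delta> = 1 / 2 ^ b"
  define Z where "Z = foldl (\<lambda>z i. if fb i then trunc_bits b (z * W i) else z) 1 [1..<k + 1]"
  define R where "R = k * (\<theta> + \<delta>) * (1 + \<theta>) ^ k"
  define R' where "R' = Suc k * (\<theta> + \<delta>) * (1 + \<theta>) ^ Suc k"
  have P: "1 \<le> P k" unfolding P_def using \<rho> by (intro prod_ge_1) auto
  have IH: "\<bar>Z - P k\<bar> \<le> P k * R" using Suc unfolding Z_def R_def \<delta>_def by simp
  have R: "0 \<le> R" unfolding R_def \<delta>_def using \<theta> by simp
  have "(\<theta> + \<delta>) * 1 \<le> (\<theta> + \<delta>) * (1 + \<theta>) ^ Suc k"
    using \<theta> unfolding \<delta>_def by (intro mult_left_mono one_le_power) auto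
  then have R_step: "R * (1 + \<theta>) + \<theta> + \<delta> \<le> R'" unfolding R_def R'_def by (simp add: algebra_simps)
  show ?case
  proof (cases "fb (Suc k)")
    case False
    have "R \<le> R * (1 + \<theta>) + \<theta> + \<delta>"
      using mult_nonneg_nonneg[OF R \<theta>] \<theta> unfolding \<delta>_def by (simp add: algebra_simps)
    then have "P k * R \<le> P k * R'"
      using R_step P by (intro mult_left_mono) auto
    then show ?thesis using IH False unfolding Z_def R'_def \<delta>_def P_def by simp
  next
    case True
    have "\<bar>trunc_bits b (Z * W (Suc k)) - P k * \<rho> (Suc k)\<bar> \<le> P k * \<rho> (Suc k) * (R * (1 + \<theta>) + \<theta> + \<delta>)"
      unfolding \<delta>_def by (rule truncated_product_step_error[OF IH P \<rho> W \<theta> R])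
    also have "\<dots> \<le> P k * \<rho> (Suc k) * R'"
      using R_step P \<rho>[of "Suc k"] by (intro mult_left_mono) auto
    finally show ?thesis using True unfolding Z_def R'_def \<delta>_def P_def by simp
  qed
qed

lemma dyadic_fraction_le_1: "(\<Sum>i=1..n. of_bool (fb i) * (1 / 2 :: real) ^ i) \<le> 1"
proof -
  have "(\<Sum>i=1..n. of_bool (fb i) * (1 / 2 :: real) ^ i) \<le> 1 - (1 / 2) ^ n"
  proof (induction n)
    case (Suc n)
    have "(\<Sum>i=1..Suc n. of_bool (fb i) * (1 / 2 :: real) ^ i)
        = (\<Sum>i=1..n. of_bool (fb i) * (1 / 2) ^ i) + of_bool (fb (Suc n)) * (1 / 2) ^ Suc n"
      by simp
    moreover have "of_bool (fb (Suc n)) * (1 / 2 :: real) ^ Suc n \<le> (1 / 2) ^ n / 2" by simp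
    moreover have "(1 / 2 :: real) ^ Suc n = (1 / 2) ^ n / 2" by simp
    ultimately show ?case using Suc by linarith
  qed simp
  moreover have "(0::real) \<le> (1 / 2) ^ n" by simp
  ultimately show ?thesis by linarith
qed

lemma one_add_power_le_3:
  fixes \<theta> :: real
  assumes "0 \<le> \<theta>" "n * \<theta> \<le> 1"
  shows "(1 + \<theta>) ^ n \<le> 3"
proof -
  have "(1 + \<theta>) ^ n \<le> exp \<theta> ^ n"
    using assms(1) by (intro power_mono) (auto simp: add.commute)
  also have "\<dots> = exp (n * \<theta>)" by (simp add: exp_of_nat_mult)
  also have "\<dots> \<le> exp 1" using assms(2) by simp
  also have "\<dots> \<le> 3" by (rule exp_le)
  finally show ?thesis .
qed

lemma powr_dyadic_fraction:
  fixes w :: real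
  assumes "0 < w"
  shows "w powr (\<Sum>i=1..n. of_bool (fb i) * (1 / 2) ^ i) = (\<Prod>i=1..n. if fb i then w powr ((1 / 2) ^ i) else 1)"
proof -
  have "w powr (\<Sum>i=1..n. of_bool (fb i) * (1 / 2) ^ i) = (\<Prod>i=1..n. w powr (of_bool (fb i) * (1 / 2) ^ i))"
    by (rule powr_sum) (use assms in simp)
  also have "\<dots> = (\<Prod>i=1..n. if fb i then w powr ((1 / 2) ^ i) else 1)"
    by (rule prod.cong) (use assms in simp_all)
  finally show ?thesis .
qed

lemma precision_budget:
  assumes b: "40 \<le> b" "5 * (real l + 2 * real m + ln (real nf)) \<le> real b" and nf: "1 \<le> nf"
  shows "256 * 4 ^ m * real nf * 2 ^ l * sqrt (1 / 2 ^ b) \<le> 1"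
proof -
  have "0 \<le> ln (real nf)" using nf by simp
  then have "ln (real nf) / ln 2 \<le> 3 / 2 * ln (real nf)"
    using ln_2_ge_two_thirds mult_right_mono[OF ln_2_ge_two_thirds, of "ln (real nf)"]
    by (simp add: divide_le_eq algebra_simps)
  then have exponent: "real (8 + 2 * m + l) + log 2 (real nf) \<le> real b / 2"
    using b by (simp add: log_def)
  have "256 * 4 ^ m * real nf * 2 ^ l = 2 ^ (8 + 2 * m + l) * real nf"
    by (simp add: power_add power_mult)
  also have "\<dots> = 2 powr real (8 + 2 * m + l) * 2 powr log 2 (real nf)"
    using nf by (subst powr_realpow) simp_all
  also have "\<dots> = 2 powr (real (8 + 2 * m + l) + log 2 (real nf))"
    by (rule powr_add[symmetric])
  also have "\<dots> \<le> 2 powr (real b / 2)" using exponent by simp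
  also have "\<dots> = sqrt (2 ^ b)"
    by (simp add: powr_half_sqrt[symmetric] powr_realpow[symmetric] powr_powr)
  finally show ?thesis by (simp add: real_sqrt_divide divide_le_eq)
qed

lemma pow2roots_truncated_product_error:
  assumes w: "1 < w" "w < 2 ^ m" and b: "40 \<le> b" "96 * 2 ^ m * sqrt (1 / 2 ^ b) \<le> 1"
  defines "\<theta> \<equiv> 96 * 2 ^ m * sqrt (1 / 2 ^ b)"
  shows "\<bar>foldl (\<lambda>z i. if fb i then trunc_bits b (z * pow2roots w n m b i) else z) 1 [1..<k + 1]
      - w powr (\<Sum>i=1..k. of_bool (fb i) * (1 / 2) ^ i)\<bar>
    \<le> w powr (\<Sum>i=1..k. of_bool (fb i) * (1 / 2) ^ i) * (k * (\<theta> + 1 / 2 ^ b) * (1 + \<theta>) ^ k)"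
proof -
  have "\<bar>foldl (\<lambda>z i. if fb i then trunc_bits b (z * pow2roots w n m b i) else z) 1 [1..<k + 1]
      - (\<Prod>i=1..k. if fb i then w powr ((1 / 2) ^ i) else 1)\<bar>
      \<le> (\<Prod>i=1..k. if fb i then w powr ((1 / 2) ^ i) else 1) * (k * (\<theta> + 1 / 2 ^ b) * (1 + \<theta>) ^ k)"
  proof (rule truncated_product_error)
    show "1 \<le> w powr ((1 / 2) ^ i)" for i using w by (intro ge_one_powr_ge_zero) auto
    show "0 \<le> pow2roots w n m b i" for i
      using pow2roots_relative_error(1)[OF w b] by (simp add: less_imp_le)
    show "\<bar>pow2roots w n m b i - w powr ((1 / 2) ^ i)\<bar> \<le> w powr ((1 / 2) ^ i) * \<theta>" for i
      using pow2roots_relative_error(2)[OF w b] unfolding \<theta>_def .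
    show "0 \<le> \<theta>" unfolding \<theta>_def by simp
  qed
  then show ?thesis using powr_dyadic_fraction[where w = w and n = k and fb = fb] w by simp
qed

lemma pow2roots_product_error:
  assumes w: "1 < w" "w < 2 ^ m" and b: "40 \<le> b" and nf: "1 \<le> nf"
    and budget: "256 * 4 ^ m * real nf * 2 ^ l * sqrt (1 / 2 ^ b) \<le> 1"
  shows "\<bar>foldl (\<lambda>z i. if fb i then trunc_bits b (z * pow2roots w n m b i) else z) 1 [1..<nf + 1]
      - w powr (\<Sum>i=1..nf. of_bool (fb i) * (1 / 2) ^ i)\<bar> \<le> 2 / 2 ^ l"
proof -
  define \<beta> where "\<beta> = sqrt (1 / 2 ^ b :: real)"
  define u where "u = 2 ^ m * \<beta>"
  define X :: real where "X = 2 ^ m * real nf * 2 ^ l"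
  define \<theta> where "\<theta> = 96 * u"
  define P where "P = w powr (\<Sum>i=1..nf. of_bool (fb i) * (1 / 2) ^ i)"
  have \<beta>: "0 \<le> \<beta>" "\<beta> \<le> u" "1 / 2 ^ b \<le> \<beta>"
  proof -
    show "0 \<le> \<beta>" "\<beta> \<le> u" unfolding u_def \<beta>_def by simp_all
    have "\<beta> * \<beta> \<le> \<beta> * 1" unfolding \<beta>_def by (intro mult_left_mono) simp_all
    then show "1 / 2 ^ b \<le> \<beta>" unfolding \<beta>_def by simp
  qed
  have "1 * 1 * 1 \<le> X" "1 * real nf * 1 \<le> X"
    using nf unfolding X_def by (intro mult_mono; simp)+
  then have X: "1 \<le> X" "real nf \<le> X" by simp_all
  have "(4::real) ^ m = 2 ^ m * 2 ^ m" by (simp flip: power_mult_distrib)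
  then have "256 * u * X = 256 * 4 ^ m * real nf * 2 ^ l * sqrt (1 / 2 ^ b)"
    unfolding u_def X_def \<beta>_def by (simp only: ac_simps)
  then have budget': "256 * u * X \<le> 1" using budget by simp
  have u: "0 \<le> u" using \<beta> by linarith
  have "u * 1 \<le> u * X" "u * real nf \<le> u * X" using u X by (intro mult_left_mono; simp)+
  then have \<theta>: "0 \<le> \<theta>" "96 * u \<le> 1" "real nf * \<theta> \<le> 1"
    using u budget' unfolding \<theta>_def by (simp_all add: algebra_simps)
  then have "96 * 2 ^ m * sqrt (1 / 2 ^ b) \<le> 1" unfolding u_def \<beta>_def by (simp add: mult.assoc)
  from pow2roots_truncated_product_error[OF w b this, where fb = fb and k = nf]
  have "\<bar>foldl (\<lambda>z i. if fb i then trunc_bits b (z * pow2roots w n m b i) else z) 1 [1..<nf + 1] - P\<bar>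
      \<le> P * (nf * (\<theta> + 1 / 2 ^ b) * (1 + \<theta>) ^ nf)"
    unfolding P_def \<theta>_def u_def \<beta>_def by (simp only: mult.assoc)
  also have "\<dots> \<le> 2 ^ m * (nf * (97 * u) * 3)"
  proof (intro mult_mono)
    have "P \<le> w powr 1"
      unfolding P_def using w dyadic_fraction_le_1[where n = nf and fb = fb] by (intro powr_mono) auto
    then show "P \<le> 2 ^ m" using w by simp
    show "(1 + \<theta>) ^ nf \<le> 3" using \<theta>(1,3) by (rule one_add_power_le_3)
  qed (use \<beta> u \<theta> in \<open>auto simp: \<theta>_def\<close>)
  also have "\<dots> = 291 * (u * X) / 2 ^ l" by (simp add: algebra_simps u_def X_def)
  also have "\<dots> \<le> 2 / 2 ^ l"
    using budget' mult_nonneg_nonneg[of u X] u X by (intro divide_right_mono) auto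
  finally show ?thesis unfolding P_def .
qed

lemma sum_powi_interval:
  "(\<Sum>j\<in>{int m - int n .. int m - 1}. (2::real) powi j) = 2 powi int m - 2 powi (int m - int n)"
proof (induction n)
  case (Suc n)
  have "{int m - int (Suc n) .. int m - 1} = insert (int m - int (Suc n)) {int m - int n .. int m - 1}"
    by auto
  moreover have "(2::real) powi (int m - int n) = 2 * 2 powi (int m - int (Suc n))"
    using power_int_add[of "2::real" 1 "int m - int (Suc n)"] by simp
  ultimately show ?case using Suc by simp
qed simp

lemma fixed_repr_less: "fixed_repr n m w \<Longrightarrow> w < 2 ^ m"
proof -
  assume "fixed_repr n m w"
  then obtain d :: "int \<Rightarrow> bool"
    where w: "w = (\<Sum>j\<in>{int m - int n .. int m - 1}. of_bool (d j) * 2 powi j)"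
    unfolding fixed_repr_def by blast
  have "w \<le> (\<Sum>j\<in>{int m - int n .. int m - 1}. (2::real) powi j)"
    unfolding w by (rule sum_mono) simp
  also have "\<dots> < 2 ^ m" unfolding sum_powi_interval by simp
  finally show ?thesis .
qed

theorem theorem4:
  fixes w f :: real and fb :: "nat \<Rightarrow> bool" and n m nf l :: nat
  assumes "fixed_repr n m w"
    and "w > 1"
    and "0 \<le> f" and "f \<le> 1"
    and "f = 1 \<or> f = (\<Sum>i=1..nf. of_bool (fb i) * (1/2) ^ i)"
  shows "\<bar>FractionalPower w f fb n m nf l - w powr f\<bar> \<le> (1/2) powr (real l - 1)"
proof -
  define b where "b = max n (max nf (max (nat \<lceil>5 * (real l + 2 * real m + ln (real nf))\<rceil>) 40))"
  have w: "1 < w" "w < 2 ^ m" using assms(1,2) fixed_repr_less by auto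
  have bound: "(1 / 2 :: real) powr (real l - 1) = 2 / 2 ^ l"
    by (simp add: powr_diff powr_realpow power_divide)
  consider "f = 1" | "f = 0" | "f \<noteq> 1" "f \<noteq> 0" "f = (\<Sum>i=1..nf. of_bool (fb i) * (1 / 2) ^ i)"
    using assms(5) by blast
  then show ?thesis
  proof cases
    case 3
    have nf: "1 \<le> nf" using 3 by (cases nf) auto
    have b: "40 \<le> b" "5 * (real l + 2 * real m + ln (real nf)) \<le> real b"
      unfolding b_def by linarith+
    have "FractionalPower w f fb n m nf l
        = foldl (\<lambda>z i. if fb i then trunc_bits b (z * pow2roots w n m b i) else z) 1 [1..<nf + 1]"
      using 3 unfolding FractionalPower_def Let_def b_def by simp
    then show ?thesis
      using pow2roots_product_error[OF w b(1) nf precision_budget[OF b nf]] 3(3) bound by simp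
  qed (use w bound in \<open>simp_all add: FractionalPower_def\<close>)
qed

end
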